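(* Let $M$ be a closed three-dimensional manifold, $f\in\mathrm{Diff}^1(M)$, and $X$ a volume-expanding hyperbolic fixed point of $f$ of index $1$ for which there is an affine unfolding of the degenerate tangency $(f_t)_{|t|<\delta}$ of $f$ with respect to $X$. Then for every sufficiently small $\varepsilon>0$ there exists $0<\tau\le\varepsilon$ such that $f_\tau$ has a hyperbolic periodic point $Y$ of index $2$ and $f_\tau$ has a heterodimensional cycle associated to $X(f_\tau)$ and $Y$, i.e. $W^u(X(f_\tau))\cap W^s(\mathcal{O}(Y))\ne\emptyset$ and $W^s(X(f_\tau))\cap W^u(\mathcal{O}(Y))\ne\emptyset$.
   Context: Index is the dimension of the unstable manifold; $X$ is volume-expanding if $|\det df(X)|>1$. Affine unfolding: let $f\in\mathrm{Diff}^1(M)$ and $X$ a hyperbolic fixed point of index $1$ with a homoclinic tangency such that the eigenvalues of $df(X)$ are positive and distinct. A family $(f_t)_{|t|<\delta}$ is an affine unfolding of the degenerate tangency of $f$ with respect to $X$ if: (DT1) $f_0=f$; (DT2) there is a chart $\phi:U\to\mathbb{R}^3$ with $\phi(U)=(-1,1)^3$ and $\phi(X)=0$; (DT3) $F_t:=\phi\circ f_t\circ\phi^{-1}$ satisfies $F_t(x,y,z)=(\lambda x,\tilde\lambda y,\mu z)$ for $(x,y,z)\in(-1,1)\times(-1,1)\times(-\mu^{-1},\mu^{-1})$, where $0<\tilde\lambda<\lambda<1<\mu$ and $X,\lambda,\tilde\lambda,\mu$ do not depend on $t$; (DT4) there are $P,Q\in U$ with $\phi(P)=(0,0,p)$,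 $\phi(Q)=(0,q,0)$, $0<p,q<1$, and an integer $N\ge2$ with $f_0^N(P)=Q$ and $f_t^i(P)\notin U$ for $0<i<N$; (DT5) writing $F_t^N=\phi\circ f_t^N\circ\phi^{-1}$, there is a neighborhood $W_0$ of $P$ with $\phi(W_0)=[-\varepsilon_0,\varepsilon_0]\times[-\varepsilon_0,\varepsilon_0]\times[p-\varepsilon_0,p+\varepsilon_0]$ (some $\varepsilon_0>0$) and $F_t^N(\phi(W_0))\subset\phi(U)$ such that $F_t^N(x,y,z+p)=(az,by+q,cx+t)$ for all $(x,y,z+p)\in\phi(W_0)$, where $a,b,c$ are non-zero real numbers. *)

theory Defs
  imports "HOL-Analysis.Analysis"
begin

type_synonym R3 = "real ^ 3"

definition C1_on :: "R3 set \<Rightarrow> (R3 \<Rightarrow> R3) \<Rightarrow> bool" where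
  "C1_on S g \<longleftrightarrow> (\<exists>g'. (\<forall>x\<in>S. (g has_derivative blinfun_apply (g' x)) (at x))
                         \<and> continuous_on S g')"

definition is_chart :: "'m::topological_space set \<Rightarrow> ('m \<Rightarrow> R3) \<Rightarrow> bool" where
  "is_chart U \<phi> \<longleftrightarrow> open U \<and> inj_on \<phi> U \<and> open (\<phi> ` U) \<and> continuous_on U \<phi>
                    \<and> continuous_on (\<phi> ` U) (inv_into U \<phi>)"

definition C1_atlas :: "('m::topological_space set \<times> ('m \<Rightarrow> R3)) set \<Rightarrow> bool" where
  "C1_atlas A \<longleftrightarrow> (\<forall>(U,\<phi>)\<in>A. is_chart U \<phi>) \<and> (\<Union>(fst ` A) = UNIV)
     \<and> (\<forall>(U,\<phi>)\<in>A. \<forall>(V,\<psi>)\<in>A. C1_on (\<phi> ` (U \<inter> V)) (\<psi> \<circ> inv_into U \<phi>))"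

definition closed_3_manifold :: "('m::t2_space set \<times> ('m \<Rightarrow> R3)) set \<Rightarrow> bool" where
  "closed_3_manifold A \<longleftrightarrow> compact (UNIV :: 'm set) \<and> C1_atlas A"

definition compatible_chart ::
  "('m::topological_space set \<times> ('m \<Rightarrow> R3)) set \<Rightarrow> 'm set \<Rightarrow> ('m \<Rightarrow> R3) \<Rightarrow> bool" where
  "compatible_chart A U \<phi> \<longleftrightarrow> is_chart U \<phi> \<and>
     (\<forall>(V,\<psi>)\<in>A. C1_on (\<phi> ` (U \<inter> V)) (\<psi> \<circ> inv_into U \<phi>)
                \<and> C1_on (\<psi> ` (U \<inter> V)) (\<phi> \<circ> inv_into V \<psi>))"

definition C1_map :: "('m::topological_space set \<times> ('m \<Rightarrow> R3)) set \<Rightarrow> ('m \<Rightarrow> 'm) \<Rightarrow> bool" where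
  "C1_map A g \<longleftrightarrow> continuous_on UNIV g \<and>
     (\<forall>(U,\<phi>)\<in>A. \<forall>(V,\<psi>)\<in>A. C1_on (\<phi> ` (U \<inter> g -` V)) (\<psi> \<circ> g \<circ> inv_into U \<phi>))"

definition Diff1 :: "('m::topological_space set \<times> ('m \<Rightarrow> R3)) set \<Rightarrow> ('m \<Rightarrow> 'm) \<Rightarrow> bool" where
  "Diff1 A g \<longleftrightarrow> bij g \<and> C1_map A g \<and> C1_map A (inv g)"

definition deriv_at_fixed ::
  "('m::topological_space set \<times> ('m \<Rightarrow> R3)) set \<Rightarrow> ('m \<Rightarrow> 'm) \<Rightarrow> 'm \<Rightarrow> (R3 \<Rightarrow> R3) \<Rightarrow> bool" where
  "deriv_at_fixed A g x L \<longleftrightarrow> g x = x \<and>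
     (\<exists>(U,\<phi>)\<in>A. x \<in> U \<and> ((\<phi> \<circ> g \<circ> inv_into U \<phi>) has_derivative L) (at (\<phi> x)))"

definition cmatrix :: "(R3 \<Rightarrow> R3) \<Rightarrow> complex ^ 3 ^ 3" where
  "cmatrix L = (\<chi> i j. complex_of_real (matrix L $ i $ j))"

definition eigenvalue :: "(R3 \<Rightarrow> R3) \<Rightarrow> complex \<Rightarrow> bool" where
  "eigenvalue L c \<longleftrightarrow> det (mat c - cmatrix L) = 0"

definition hyperbolic_lin :: "(R3 \<Rightarrow> R3) \<Rightarrow> bool" where
  "hyperbolic_lin L \<longleftrightarrow> linear L \<and> det (matrix L) \<noteq> 0 \<and> (\<forall>c. eigenvalue L c \<longrightarrow> cmod c \<noteq> 1)"

definition unstable_subspace :: "(R3 \<Rightarrow> R3) \<Rightarrow> R3 set" where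
  "unstable_subspace L = {v. ((\<lambda>n. (inv L ^^ n) v) \<longlongrightarrow> 0) sequentially}"

definition hyperbolic_fixed_index ::
  "('m::topological_space set \<times> ('m \<Rightarrow> R3)) set \<Rightarrow> ('m \<Rightarrow> 'm) \<Rightarrow> 'm \<Rightarrow> nat \<Rightarrow> bool" where
  "hyperbolic_fixed_index A g x k \<longleftrightarrow>
     (\<exists>L. deriv_at_fixed A g x L \<and> hyperbolic_lin L \<and> dim (unstable_subspace L) = k)"

definition Ws_point :: "('m::topological_space \<Rightarrow> 'm) \<Rightarrow> 'm \<Rightarrow> 'm set" where
  "Ws_point g x = {z. ((\<lambda>n. (g ^^ n) z) \<longlongrightarrow> x) sequentially}"

definition Wu_point :: "('m::topological_space \<Rightarrow> 'm) \<Rightarrow> 'm \<Rightarrow> 'm set" where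
  "Wu_point g x = Ws_point (inv g) x"

definition orbit :: "('m \<Rightarrow> 'm) \<Rightarrow> 'm \<Rightarrow> 'm set" where
  "orbit g y = {(g ^^ n) y | n. True}"

text \<open>Stable / unstable set of the orbit of a periodic point y with g^k y = y.\<close>
definition Ws_orbit :: "('m::topological_space \<Rightarrow> 'm) \<Rightarrow> nat \<Rightarrow> 'm \<Rightarrow> 'm set" where
  "Ws_orbit g k y = (\<Union>w\<in>orbit g y. Ws_point (g ^^ k) w)"

definition Wu_orbit :: "('m::topological_space \<Rightarrow> 'm) \<Rightarrow> nat \<Rightarrow> 'm \<Rightarrow> 'm set" where
  "Wu_orbit g k y = (\<Union>w\<in>orbit g y. Wu_point (g ^^ k) w)"

end

theory Submission
  imports Defs
begin

text \<open>Near X the map f_\<tau> is linear in the chart, and N further steps carry a neighbourhood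
  of P affinely to one of Q. With \<tau> = p / \<mu>^n the return map f_\<tau>^(n+N) near P reads
  (x, y, z) \<mapsto> (lam^n a (z - p), \<sigma> y + lamt^n q, p + \<mu>^n c x) with \<sigma> = lamt^n b, so its square
  is affine with linear part diag(\<Lambda>, \<sigma>^2, \<Lambda>), \<Lambda> = (lam \<mu>)^n a c. Volume expansion
  lam lamt \<mu> > 1 gives lam \<mu> > 1, so for large n the fixed point Y of the square is a saddle of
  index 2. The segment {x = 0, z = p} through P lies in W^s(Y), while P lies on the unstable axis
  of X; the line {y = y(Y), z = p} lies in W^u(Y) and f_\<tau>^N carries it into the stable plane
  {z = 0} of X.\<close>

definition diag3 :: "real \<Rightarrow> real \<Rightarrow> real \<Rightarrow> real^3 \<Rightarrow> real^3" where
  "diag3 \<alpha> \<beta> \<gamma> v = vector [\<alpha> * v$1, \<beta> * v$2, \<gamma> * v$3]"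

lemma diag3_nth [simp]:
  "diag3 \<alpha> \<beta> \<gamma> v $ 1 = \<alpha> * v$1" "diag3 \<alpha> \<beta> \<gamma> v $ 2 = \<beta> * v$2" "diag3 \<alpha> \<beta> \<gamma> v $ 3 = \<gamma> * v$3"
  by (simp_all add: diag3_def)

lemma tendsto_vector3:
  assumes "(f \<longlongrightarrow> a) F" "(g \<longlongrightarrow> b) F" "(h \<longlongrightarrow> c) F"
  shows "((\<lambda>x. vector [f x, g x, h x] :: real^3) \<longlongrightarrow> vector [a, b, c]) F"
proof (rule vec_tendstoI)
  fix i :: 3
  show "((\<lambda>x. vector [f x, g x, h x] $ i) \<longlongrightarrow> vector [a, b, c] $ i) F"
    using assms exhaust_3[of i] by auto
qed

lemma vector_3_zero: "vector [0, 0, 0] = (0 :: real^3)"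
  by (simp add: vec_eq_iff forall_3)

lemma linear_diag3: "linear (diag3 \<alpha> \<beta> \<gamma>)"
  by (rule linearI) (simp_all add: vec_eq_iff forall_3 algebra_simps)

lemma diag3_comp: "diag3 \<alpha> \<beta> \<gamma> \<circ> diag3 \<alpha>' \<beta>' \<gamma>' = diag3 (\<alpha> * \<alpha>') (\<beta> * \<beta>') (\<gamma> * \<gamma>')"
  by (simp add: fun_eq_iff vec_eq_iff forall_3)

lemma diag3_1: "diag3 1 1 1 = id"
  by (simp add: fun_eq_iff vec_eq_iff forall_3)

lemma funpow_diag3: "diag3 \<alpha> \<beta> \<gamma> ^^ m = diag3 (\<alpha> ^ m) (\<beta> ^ m) (\<gamma> ^ m)"
  by (induction m) (simp_all add: diag3_1 diag3_comp)

lemma diag3_inverse: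
  assumes "\<alpha> \<noteq> 0" "\<beta> \<noteq> 0" "\<gamma> \<noteq> 0"
  shows "diag3 \<alpha> \<beta> \<gamma> \<circ> diag3 (1/\<alpha>) (1/\<beta>) (1/\<gamma>) = id"
    "diag3 (1/\<alpha>) (1/\<beta>) (1/\<gamma>) \<circ> diag3 \<alpha> \<beta> \<gamma> = id"
  using assms by (simp_all add: diag3_comp diag3_1)

lemma matrix_diag3:
  "matrix (diag3 \<alpha> \<beta> \<gamma>) = (\<chi> i j. if i = j then diag3 \<alpha> \<beta> \<gamma> 1 $ i else 0)"
  by (simp add: matrix_def vec_eq_iff forall_3 axis_def)

lemma det_matrix_diag3: "det (matrix (diag3 \<alpha> \<beta> \<gamma>)) = \<alpha> * \<beta> * \<gamma>"
  by (simp add: matrix_diag3 det_3)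

lemma eigenvalue_diag3:
  "eigenvalue (diag3 \<alpha> \<beta> \<gamma>) z \<longleftrightarrow> z = of_real \<alpha> \<or> z = of_real \<beta> \<or> z = of_real \<gamma>"
proof -
  have "eigenvalue (diag3 \<alpha> \<beta> \<gamma>) z \<longleftrightarrow> (z - of_real \<alpha>) * (z - of_real \<beta>) * (z - of_real \<gamma>) = 0"
    unfolding eigenvalue_def cmatrix_def matrix_diag3 by (simp add: det_3 mat_def)
  then show ?thesis by auto
qed

lemma hyperbolic_lin_diag3:
  assumes "\<alpha> \<noteq> 0" "\<beta> \<noteq> 0" "\<gamma> \<noteq> 0" "\<bar>\<alpha>\<bar> \<noteq> 1" "\<bar>\<beta>\<bar> \<noteq> 1" "\<bar>\<gamma>\<bar> \<noteq> 1"
  shows "hyperbolic_lin (diag3 \<alpha> \<beta> \<gamma>)"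
  using assms by (auto simp: hyperbolic_lin_def linear_diag3 det_matrix_diag3 eigenvalue_diag3)

lemma unstable_subspace_diag3_saddle:
  assumes "\<bar>\<alpha>\<bar> > 1" "\<beta> \<noteq> 0" "\<bar>\<beta>\<bar> < 1" "\<bar>\<gamma>\<bar> > 1"
  shows "unstable_subspace (diag3 \<alpha> \<beta> \<gamma>) = {v. v $ 2 = 0}"
proof -
  have "inv (diag3 \<alpha> \<beta> \<gamma>) = diag3 (1/\<alpha>) (1/\<beta>) (1/\<gamma>)"
    using assms by (intro inv_unique_comp diag3_inverse) auto
  then have iter: "(inv (diag3 \<alpha> \<beta> \<gamma>) ^^ n) v = vector [v$1 / \<alpha>^n, v$2 / \<beta>^n, v$3 / \<gamma>^n]" for n v
    by (simp add: funpow_diag3 diag3_def power_one_over)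
  have "(\<lambda>n. (inv (diag3 \<alpha> \<beta> \<gamma>) ^^ n) v) \<longlonglongrightarrow> 0 \<longleftrightarrow> v $ 2 = 0" for v
  proof
    assume "(\<lambda>n. (inv (diag3 \<alpha> \<beta> \<gamma>) ^^ n) v) \<longlonglongrightarrow> 0"
    from tendsto_vec_nth[OF this, of 2] have "(\<lambda>n. v$2 / \<beta>^n) \<longlonglongrightarrow> 0"
      by (simp add: iter)
    then have "(\<lambda>n. \<beta>^n * (v$2 / \<beta>^n)) \<longlonglongrightarrow> 0 * 0"
      using assms(3) by (intro tendsto_mult LIMSEQ_power_zero) auto
    then show "v $ 2 = 0"
      using assms(2) by (simp add: LIMSEQ_const_iff)
  next
    assume "v $ 2 = 0"
    moreover have "(\<lambda>n. v$i * (1/\<alpha>)^n) \<longlonglongrightarrow> 0" "(\<lambda>n. v$i * (1/\<gamma>)^n) \<longlonglongrightarrow> 0" for i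
      using assms by (auto intro!: tendsto_mult_right_zero LIMSEQ_power_zero)
    ultimately have "(\<lambda>n. vector [v$1 / \<alpha>^n, v$2 / \<beta>^n, v$3 / \<gamma>^n] :: real^3) \<longlonglongrightarrow> vector [0, 0, 0]"
      by (intro tendsto_vector3) (simp_all add: power_one_over)
    then show "(\<lambda>n. (inv (diag3 \<alpha> \<beta> \<gamma>) ^^ n) v) \<longlonglongrightarrow> 0"
      by (simp add: iter vector_3_zero)
  qed
  then show ?thesis by (auto simp: unstable_subspace_def)
qed

lemma dim_unstable_subspace_diag3_saddle:
  assumes "\<bar>\<alpha>\<bar> > 1" "\<beta> \<noteq> 0" "\<bar>\<beta>\<bar> < 1" "\<bar>\<gamma>\<bar> > 1"
  shows "dim (unstable_subspace (diag3 \<alpha> \<beta> \<gamma>)) = 2"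
proof -
  have "{v::real^3. v $ 2 = 0} = {x. axis 2 1 \<bullet> x = 0}"
    by (simp add: inner_axis')
  moreover have "dim {x::real^3. axis 2 1 \<bullet> x = 0} = 2"
    by (subst dim_hyperplane) simp_all
  ultimately show ?thesis using unstable_subspace_diag3_saddle[OF assms] by simp
qed

lemma det_char_matrix_similar:
  fixes S S' D :: "'a::field^'n^'n"
  assumes "S ** S' = mat 1"
  shows "det (mat z - S ** D ** S') = det (mat z - D)"
proof -
  have diff_left: "A ** (B - C) = A ** B - A ** C"
    and diff_right: "(B - C) ** A = B ** A - C ** A" for A B C :: "'a^'n^'n"
    by (simp_all add: matrix_matrix_mult_def vec_eq_iff sum_subtractf algebra_simps)
  have "S ** mat z = mat z ** S"
    by (simp add: matrix_matrix_mult_def mat_def vec_eq_iff if_distrib if_distribR mult.commute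
        cong del: if_weak_cong)
  then have "S ** mat z ** S' = mat z"
    by (simp add: assms flip: matrix_mul_assoc)
  then have similar: "mat z - S ** D ** S' = S ** (mat z - D) ** S'"
    by (simp add: diff_left diff_right)
  have "det S * det S' = 1"
    using assms by (metis det_I det_mul)
  then show ?thesis
    unfolding similar det_mul by (simp add: algebra_simps)
qed

context
  fixes T T' :: "real^3 \<Rightarrow> real^3"
  assumes linear: "linear T" "linear T'" and inverse: "T \<circ> T' = id" "T' \<circ> T = id"
begin

lemma matrix_conjugate_inverse: "matrix T ** matrix T' = mat 1"
  using matrix_compose[OF linear(2,1)] inverse by (simp add: matrix_id_mat_1)

lemma det_matrix_conjugate:
  assumes "linear D"
  shows "det (matrix (T \<circ> D \<circ> T')) = det (matrix D)"
proof -
  have "det (matrix T) * det (matrix T') = 1"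
    using matrix_conjugate_inverse by (metis det_I det_mul)
  then show ?thesis
    using linear assms by (simp add: matrix_compose linear_compose det_mul algebra_simps)
qed

lemma eigenvalue_conjugate:
  assumes "linear D"
  shows "eigenvalue (T \<circ> D \<circ> T') z \<longleftrightarrow> eigenvalue D z"
proof -
  let ?c = "\<lambda>M :: real^3^3. \<chi> i j. complex_of_real (M $ i $ j)"
  have c_mult: "?c (M ** M') = ?c M ** ?c M'" for M M'
    by (simp add: matrix_matrix_mult_def vec_eq_iff)
  have "?c (matrix T) ** ?c (matrix T') = mat 1"
    using matrix_conjugate_inverse by (simp add: c_mult[symmetric] mat_def vec_eq_iff)
  from det_char_matrix_similar[OF this, of z "?c (matrix D)"]
  show ?thesis
    using linear assms by (simp add: eigenvalue_def cmatrix_def matrix_compose linear_compose c_mult)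
qed

lemma hyperbolic_lin_conjugate:
  assumes "hyperbolic_lin D"
  shows "hyperbolic_lin (T \<circ> D \<circ> T')"
  using assms linear det_matrix_conjugate eigenvalue_conjugate
  by (auto simp: hyperbolic_lin_def linear_compose)

lemma unstable_subspace_conjugate:
  assumes "D \<circ> D' = id" "D' \<circ> D = id"
  shows "unstable_subspace (T \<circ> D \<circ> T') = T ` unstable_subspace D"
proof -
  have TT': "T (T' x) = x" "T' (T x) = x" for x
    using inverse by (metis comp_apply id_apply)+
  have DD': "D (D' x) = x" "D' (D x) = x" for x
    using assms by (metis comp_apply id_apply)+
  have "inv (T \<circ> D \<circ> T') = T \<circ> D' \<circ> T'" "inv D = D'"
    by (rule inv_unique_comp; simp add: fun_eq_iff TT' DD')+
  then have iter: "(inv (T \<circ> D \<circ> T') ^^ n) v = T ((inv D ^^ n) (T' v))" for n v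
    by (induction n) (simp_all add: TT')
  have lim_T: "((\<lambda>n. L (s n)) \<longlonglongrightarrow> 0)" if "linear L" "s \<longlonglongrightarrow> 0" for L :: "real^3 \<Rightarrow> real^3" and s
    using bounded_linear.tendsto[OF linear_conv_bounded_linear[THEN iffD1, OF that(1)] that(2)]
      linear_0[OF that(1)] by simp
  have mem: "v \<in> unstable_subspace (T \<circ> D \<circ> T') \<longleftrightarrow> T' v \<in> unstable_subspace D" for v
    unfolding unstable_subspace_def mem_Collect_eq iter
    using lim_T[OF linear(1)] lim_T[OF linear(2), of "\<lambda>n. T ((inv D ^^ n) (T' v))"] by (auto simp: TT')
  show ?thesis
  proof (intro set_eqI iffI)
    fix v assume "v \<in> unstable_subspace (T \<circ> D \<circ> T')"
    then show "v \<in> T ` unstable_subspace D"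
      using mem by (metis TT'(1) image_eqI)
  qed (auto simp: mem TT')
qed

lemma dim_unstable_subspace_conjugate:
  assumes "D \<circ> D' = id" "D' \<circ> D = id"
  shows "dim (unstable_subspace (T \<circ> D \<circ> T')) = dim (unstable_subspace D)"
proof -
  have "inj T"
    using inverse by (metis inj_on_id inj_on_imageI2)
  then show ?thesis
    using unstable_subspace_conjugate[OF assms] dim_image_eq[OF linear(1)] by (simp add: inj_on_subset)
qed

end

lemma has_derivative_left_inverse_comp:
  assumes "(g has_derivative g') (at (f x))" "(f has_derivative f') (at x)"
    and "open W" "x \<in> W" "\<And>w. w \<in> W \<Longrightarrow> g (f w) = w"
  shows "g' \<circ> f' = id"
proof -
  have "(g \<circ> f has_derivative g' \<circ> f') (at x)"
    using diff_chain_at[OF assms(2,1)] .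
  then have "(id has_derivative g' \<circ> f') (at x)"
    by (rule has_derivative_transform_within_open[OF _ assms(3,4)]) (simp add: assms(5))
  then show ?thesis
    using has_derivative_unique has_derivative_id by blast
qed

lemma has_derivative_conjugate_locally:
  assumes df: "(f has_derivative f') (at y)" and dH: "(H has_derivative H') (at (f y))"
    and dg: "(g has_derivative g') (at (H (f y)))"
    and W: "open W" "y \<in> W" "continuous_on W f" and Om: "open Om" "f y \<in> Om"
    and F: "\<And>w. w \<in> W \<Longrightarrow> f w \<in> Om \<Longrightarrow> F w = g (H (f w))"
  shows "(F has_derivative g' \<circ> H' \<circ> f') (at y)"
proof -
  have "(g \<circ> H \<circ> f has_derivative g' \<circ> H' \<circ> f') (at y)"
    using diff_chain_at[OF diff_chain_at[OF df dH]] dg by (simp add: o_assoc)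
  moreover have "open (f -` Om \<inter> W)"
    using W Om(1) continuous_on_open_vimage by blast
  ultimately show ?thesis
    by (rule has_derivative_transform_within_open) (use W(2) Om(2) F in auto)
qed

lemma chart_image_open:
  assumes "is_chart V \<psi>" "open S" "S \<subseteq> V"
  shows "open (\<psi> ` S)"
proof -
  have inj: "inj_on \<psi> V" and "open (\<psi> ` V)" "continuous_on (\<psi> ` V) (inv_into V \<psi>)"
    using assms(1) unfolding is_chart_def by auto
  then have "open (inv_into V \<psi> -` S \<inter> \<psi> ` V)"
    using assms(2) continuous_on_open_vimage by blast
  moreover have "\<psi> ` S = inv_into V \<psi> -` S \<inter> \<psi> ` V"
    using assms(3) inj by (auto simp: inv_into_f_f f_inv_into_f intro!: image_eqI)
  ultimately show ?thesis by simp
qed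

lemma transition_map_derivatives:
  fixes A :: "('m::t2_space set \<times> ('m \<Rightarrow> real ^ 3)) set"
  assumes atlas: "C1_atlas A" and cc: "compatible_chart A U \<phi>"
    and VA: "(V, \<psi>) \<in> A" and YV: "Y \<in> V" and YU: "Y \<in> U"
  obtains T T' where "linear T" "linear T'" "T \<circ> T' = id" "T' \<circ> T = id"
    "((\<psi> \<circ> inv_into U \<phi>) has_derivative T) (at (\<phi> Y))"
    "((\<phi> \<circ> inv_into V \<psi>) has_derivative T') (at (\<psi> Y))"
proof -
  have chV: "is_chart V \<psi>" using atlas VA unfolding C1_atlas_def by blast
  have chU: "is_chart U \<phi>" using cc unfolding compatible_chart_def by blast
  have injU: "inj_on \<phi> U" and injV: "inj_on \<psi> V" and "open U" "open V"
    using chU chV unfolding is_chart_def by auto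
  define h1 where "h1 = \<psi> \<circ> inv_into U \<phi>"
  define h2 where "h2 = \<phi> \<circ> inv_into V \<psi>"
  define W where "W = \<psi> ` (U \<inter> V)"
  define W' where "W' = \<phi> ` (U \<inter> V)"
  have "C1_on W' h1" "C1_on W h2"
    using cc VA unfolding compatible_chart_def h1_def h2_def W_def W'_def by auto
  then obtain g1 g2 where g1: "\<And>x. x \<in> W' \<Longrightarrow> (h1 has_derivative blinfun_apply (g1 x)) (at x)"
    and g2: "\<And>x. x \<in> W \<Longrightarrow> (h2 has_derivative blinfun_apply (g2 x)) (at x)"
    unfolding C1_on_def by metis
  have "open W" "open W'"
    unfolding W_def W'_def using chart_image_open chU chV \<open>open U\<close> \<open>open V\<close> by blast+
  have YW: "\<phi> Y \<in> W'" "\<psi> Y \<in> W" using YU YV unfolding W_def W'_def by auto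
  have h2Y: "h2 (\<psi> Y) = \<phi> Y" and h1Y: "h1 (\<phi> Y) = \<psi> Y"
    unfolding h1_def h2_def using YU YV injU injV by (simp_all add: inv_into_f_f)
  define T where "T = blinfun_apply (g1 (\<phi> Y))"
  define T' where "T' = blinfun_apply (g2 (\<psi> Y))"
  have d1: "(h1 has_derivative T) (at (\<phi> Y))" and d2: "(h2 has_derivative T') (at (\<psi> Y))"
    using g1 g2 YW unfolding T_def T'_def by blast+
  have "linear T" "linear T'"
    unfolding T_def T'_def by (simp_all add: blinfun.bounded_linear_right bounded_linear.linear)
  have "h1 (h2 w) = w" if "w \<in> W" for w
    using that injU injV by (auto simp: W_def h1_def h2_def inv_into_f_f)
  then have "T \<circ> T' = id"
    using has_derivative_left_inverse_comp[OF _ d2 \<open>open W\<close> YW(2)] d1 h2Y by simp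
  have "h2 (h1 w) = w" if "w \<in> W'" for w
    using that injU injV by (auto simp: W'_def h1_def h2_def inv_into_f_f)
  then have "T' \<circ> T = id"
    using has_derivative_left_inverse_comp[OF _ d1 \<open>open W'\<close> YW(1)] d2 h1Y by simp
  show ?thesis
    using that \<open>linear T\<close> \<open>linear T'\<close> \<open>T \<circ> T' = id\<close> \<open>T' \<circ> T = id\<close> d1 d2
    unfolding h1_def h2_def by blast
qed

lemma chart_change_derivative:
  fixes A :: "('m::t2_space set \<times> ('m \<Rightarrow> real ^ 3)) set" and h :: "'m \<Rightarrow> 'm"
  assumes atlas: "C1_atlas A" and cc: "compatible_chart A U \<phi>"
    and VA: "(V, \<psi>) \<in> A" and YV: "Y \<in> V" and YU: "Y \<in> U"
    and Om: "open Om" "\<phi> Y \<in> Om"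
    and local_form: "\<And>u. u \<in> Om \<Longrightarrow> h (inv_into U \<phi> u) = inv_into U \<phi> (H u)"
    and fixed: "H (\<phi> Y) = \<phi> Y" and deriv: "(H has_derivative D) (at (\<phi> Y))"
  obtains T T' where "linear T" "linear T'" "T \<circ> T' = id" "T' \<circ> T = id"
    "((\<psi> \<circ> h \<circ> inv_into V \<psi>) has_derivative T \<circ> D \<circ> T') (at (\<psi> Y))"
proof -
  obtain T T' where T: "linear T" "linear T'" "T \<circ> T' = id" "T' \<circ> T = id"
    and d1: "((\<psi> \<circ> inv_into U \<phi>) has_derivative T) (at (\<phi> Y))"
    and d2: "((\<phi> \<circ> inv_into V \<psi>) has_derivative T') (at (\<psi> Y))"
    using transition_map_derivatives[OF atlas cc VA YV YU] by blast
  have "is_chart V \<psi>" "is_chart U \<phi>"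
    using atlas VA cc unfolding C1_atlas_def compatible_chart_def by auto
  then have injU: "inj_on \<phi> U" and injV: "inj_on \<psi> V" and "open U" "open V"
    and contU: "continuous_on U \<phi>" and contV: "continuous_on (\<psi> ` V) (inv_into V \<psi>)"
    unfolding is_chart_def by auto
  define W where "W = \<psi> ` (U \<inter> V)"
  have "open W"
    unfolding W_def using chart_image_open \<open>is_chart V \<psi>\<close> \<open>open U\<close> \<open>open V\<close> by blast
  have "\<psi> Y \<in> W" using YU YV unfolding W_def by blast
  have inv_W: "inv_into V \<psi> w \<in> U \<inter> V" if "w \<in> W" for w
    using that injV unfolding W_def by (auto simp: inv_into_f_f)
  have "continuous_on W (inv_into V \<psi>)"
    by (rule continuous_on_subset[OF contV]) (auto simp: W_def)
  moreover have "continuous_on (inv_into V \<psi> ` W) \<phi>"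
    by (rule continuous_on_subset[OF contU]) (use inv_W in auto)
  ultimately have cont: "continuous_on W (\<phi> \<circ> inv_into V \<psi>)"
    by (rule continuous_on_compose)
  have YY: "(\<phi> \<circ> inv_into V \<psi>) (\<psi> Y) = \<phi> Y" "(\<psi> \<circ> inv_into U \<phi>) (\<phi> Y) = \<psi> Y"
    using YU YV injU injV by (simp_all add: inv_into_f_f)
  have "((\<psi> \<circ> h \<circ> inv_into V \<psi>) has_derivative T \<circ> D \<circ> T') (at (\<psi> Y))"
  proof (rule has_derivative_conjugate_locally[OF d2 _ _ \<open>open W\<close> \<open>\<psi> Y \<in> W\<close> cont Om(1)])
    show "(H has_derivative D) (at ((\<phi> \<circ> inv_into V \<psi>) (\<psi> Y)))"
      using deriv YY by simp
    show "((\<psi> \<circ> inv_into U \<phi>) has_derivative T) (at (H ((\<phi> \<circ> inv_into V \<psi>) (\<psi> Y))))"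
      using d1 YY fixed by simp
    show "(\<phi> \<circ> inv_into V \<psi>) (\<psi> Y) \<in> Om"
      using Om(2) YY by simp
    show "(\<psi> \<circ> h \<circ> inv_into V \<psi>) w = (\<psi> \<circ> inv_into U \<phi>) (H ((\<phi> \<circ> inv_into V \<psi>) w))"
      if "w \<in> W" "(\<phi> \<circ> inv_into V \<psi>) w \<in> Om" for w
      using local_form[OF that(2)] inv_W[OF that(1)] injU by (simp add: inv_into_f_f)
  qed
  with that T show ?thesis by blast
qed

lemma hyperbolic_fixed_index_from_chart:
  fixes A :: "('m::t2_space set \<times> ('m \<Rightarrow> real ^ 3)) set" and h :: "'m \<Rightarrow> 'm"
  assumes atlas: "C1_atlas A" and cc: "compatible_chart A U \<phi>"
    and YU: "Y \<in> U" and "h Y = Y" and Om: "open Om" "\<phi> Y \<in> Om"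
    and local_form: "\<And>u. u \<in> Om \<Longrightarrow> h (inv_into U \<phi> u) = inv_into U \<phi> (H u)"
    and fixed: "H (\<phi> Y) = \<phi> Y" and deriv: "(H has_derivative D) (at (\<phi> Y))"
    and hyp: "hyperbolic_lin D" and inverse: "D \<circ> D' = id" "D' \<circ> D = id"
  shows "hyperbolic_fixed_index A h Y (dim (unstable_subspace D))"
proof -
  have "Y \<in> \<Union> (fst ` A)" using atlas unfolding C1_atlas_def by simp
  then obtain V \<psi> where VA: "(V, \<psi>) \<in> A" and YV: "Y \<in> V" by auto
  obtain T T' where T: "linear T" "linear T'" "T \<circ> T' = id" "T' \<circ> T = id"
    and dL: "((\<psi> \<circ> h \<circ> inv_into V \<psi>) has_derivative T \<circ> D \<circ> T') (at (\<psi> Y))"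
    using chart_change_derivative[OF atlas cc VA YV YU Om local_form fixed deriv] by blast
  have "deriv_at_fixed A h Y (T \<circ> D \<circ> T')"
    unfolding deriv_at_fixed_def using \<open>h Y = Y\<close> VA YV dL by blast
  then show ?thesis
    unfolding hyperbolic_fixed_index_def
    using hyperbolic_lin_conjugate[OF T hyp] dim_unstable_subspace_conjugate[OF T inverse]
    by (intro exI[of _ "T \<circ> D \<circ> T'"] conjI)
qed

lemma det_deriv_at_fixed_from_chart:
  fixes A :: "('m::t2_space set \<times> ('m \<Rightarrow> real ^ 3)) set" and h :: "'m \<Rightarrow> 'm"
  assumes atlas: "C1_atlas A" and cc: "compatible_chart A U \<phi>"
    and YU: "Y \<in> U" and Om: "open Om" "\<phi> Y \<in> Om"
    and local_form: "\<And>u. u \<in> Om \<Longrightarrow> h (inv_into U \<phi> u) = inv_into U \<phi> (H u)"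
    and fixed: "H (\<phi> Y) = \<phi> Y" and deriv: "(H has_derivative D) (at (\<phi> Y))"
    and "linear D" and L: "deriv_at_fixed A h Y L"
  shows "det (matrix L) = det (matrix D)"
proof -
  obtain V \<psi> where VA: "(V, \<psi>) \<in> A" and YV: "Y \<in> V"
    and dL: "((\<psi> \<circ> h \<circ> inv_into V \<psi>) has_derivative L) (at (\<psi> Y))"
    using L unfolding deriv_at_fixed_def by blast
  obtain T T' where T: "linear T" "linear T'" "T \<circ> T' = id" "T' \<circ> T = id"
    and dTDT: "((\<psi> \<circ> h \<circ> inv_into V \<psi>) has_derivative T \<circ> D \<circ> T') (at (\<psi> Y))"
    using chart_change_derivative[OF atlas cc VA YV YU Om local_form fixed deriv] by blast
  have "L = T \<circ> D \<circ> T'" using has_derivative_unique[OF dL dTDT] .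
  then show ?thesis using det_matrix_conjugate[OF T \<open>linear D\<close>] by simp
qed

lemma abs_power_mult_less_one:
  fixes r w :: real
  assumes "0 \<le> r" "r \<le> 1" "\<bar>w\<bar> < 1"
  shows "\<bar>r ^ m * w\<bar> < 1"
  using assms mult_left_le_one_le[of "\<bar>w\<bar>" "r ^ m"] by (simp add: abs_mult power_le_one)

lemma Ws_point_funpow_iff: "(f ^^ k) z \<in> Ws_point f x \<longleftrightarrow> z \<in> Ws_point f x"
proof -
  have "(\<lambda>m. (f ^^ m) ((f ^^ k) z)) = (\<lambda>m. (f ^^ (m + k)) z)"
    by (simp add: funpow_add)
  then show ?thesis
    unfolding Ws_point_def mem_Collect_eq
    using LIMSEQ_offset[of "\<lambda>m. (f ^^ m) z" k x] LIMSEQ_ignore_initial_segment[of "\<lambda>m. (f ^^ m) z" x k]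
    by auto
qed

text \<open>n is the number of steps near X in one return of f_\<tau>, and \<mu>^n \<tau> = p makes it land back
  at height p. The bounds in regime keep the segment through P, the fixed point and its backward
  orbit inside the domain of the return map.\<close>
locale affine_return_regime =
  fixes A :: "('m::t2_space set \<times> ('m \<Rightarrow> real ^ 3)) set"
    and U :: "'m set" and \<phi> :: "'m \<Rightarrow> real ^ 3" and X :: 'm
    and fam :: "real \<Rightarrow> 'm \<Rightarrow> 'm" and \<delta> lam lamt \<mu> p q a b c \<tau> e0 :: real and N n :: nat
  assumes atlas: "C1_atlas A" and chart: "compatible_chart A U \<phi>"
    and chart_image: "\<phi> ` U = {v. \<forall>i. -1 < v $ i \<and> v $ i < 1}"
    and X: "X \<in> U" "\<phi> X = 0"
    and diff: "Diff1 A (fam \<tau>)" and tau_delta: "\<tau> < \<delta>"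
    and rates_ord: "0 < lamt" "lamt < lam" "lam < 1" "1 < \<mu>"
    and linear_part: "\<And>t v. \<bar>t\<bar> < \<delta> \<Longrightarrow> \<bar>v $ 1\<bar> < 1 \<Longrightarrow> \<bar>v $ 2\<bar> < 1 \<Longrightarrow> \<bar>v $ 3\<bar> < 1 / \<mu> \<Longrightarrow>
        fam t (inv_into U \<phi> v) \<in> U \<and>
        \<phi> (fam t (inv_into U \<phi> v)) = vector [lam * v $ 1, lamt * v $ 2, \<mu> * v $ 3]"
    and transition: "\<And>t x y z. \<bar>t\<bar> < \<delta> \<Longrightarrow> \<bar>x\<bar> \<le> e0 \<Longrightarrow> \<bar>y\<bar> \<le> e0 \<Longrightarrow> \<bar>z\<bar> \<le> e0 \<Longrightarrow>
        (fam t ^^ N) (inv_into U \<phi> (vector [x, y, z + p])) \<in> U \<and>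
        \<phi> ((fam t ^^ N) (inv_into U \<phi> (vector [x, y, z + p]))) = vector [a * z, b * y + q, c * x + t]"
    and e0: "0 < e0" "{v. \<bar>v $ 1\<bar> \<le> e0 \<and> \<bar>v $ 2\<bar> \<le> e0 \<and> \<bar>v $ 3 - p\<bar> \<le> e0} \<subseteq> \<phi> ` U"
    and pq: "0 < p" "p < 1" "0 < q" "q < 1"
    and bc: "b \<noteq> 0" "c \<noteq> 0"
    and N: "0 < N"
    and tau: "\<mu> ^ n * \<tau> = p"
    and regime: "\<tau> < \<bar>c\<bar> * e0" "4 * lamt ^ n * \<bar>b\<bar> < 1 - q" "4 * lamt ^ n * q < e0"
      "1 + p / (1 - p) + p / e0 + \<bar>a\<bar> * p < \<bar>(lam * \<mu>) ^ n * a * c\<bar>"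
begin

abbreviation g :: "'m \<Rightarrow> 'm" where "g \<equiv> fam \<tau>"

lemma rates: "0 < lamt" "lamt < 1" "0 < lam" "lam < 1" "1 < \<mu>"
  using rates_ord by simp_all

lemma bij_g: "bij g"
  using diff by (simp add: Diff1_def)

lemma tau_pos: "0 < \<tau>"
  using tau pq rates by (metis zero_less_mult_pos zero_less_power less_trans zero_less_one)

lemma abs_tau: "\<bar>\<tau>\<bar> < \<delta>"
  using tau_pos tau_delta by simp

abbreviation \<iota> :: "real^3 \<Rightarrow> 'm" where "\<iota> \<equiv> inv_into U \<phi>"

lemma chart_inverse:
  shows "u \<in> \<phi> ` U \<Longrightarrow> \<iota> u \<in> U" and "u \<in> \<phi> ` U \<Longrightarrow> \<phi> (\<iota> u) = u"
    and "x \<in> U \<Longrightarrow> \<iota> (\<phi> x) = x"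
  using chart by (auto simp: compatible_chart_def is_chart_def inv_into_into f_inv_into_f inv_into_f_f)

lemma in_chart_image: "\<bar>u $ 1\<bar> < 1 \<Longrightarrow> \<bar>u $ 2\<bar> < 1 \<Longrightarrow> \<bar>u $ 3\<bar> < 1 \<Longrightarrow> u \<in> \<phi> ` U"
  unfolding chart_image by (auto simp: forall_3 abs_less_iff)

lemma chart_inverse_zero: "\<iota> 0 = X"
  using chart_inverse(3)[OF X(1)] X(2) by simp

lemma tendsto_chart_inverse:
  assumes "(s \<longlongrightarrow> v) F" "v \<in> \<phi> ` U"
  shows "((\<lambda>x. \<iota> (s x)) \<longlongrightarrow> \<iota> v) F"
proof -
  have cont: "continuous_on (\<phi> ` U) \<iota>" and "open (\<phi> ` U)"
    using chart by (simp_all add: compatible_chart_def is_chart_def)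
  then have "eventually (\<lambda>x. s x \<in> \<phi> ` U) F"
    using topological_tendstoD assms by blast
  then show ?thesis
    by (rule continuous_on_tendsto_compose[OF cont assms])
qed

lemma g_linear:
  assumes "\<bar>v $ 1\<bar> < 1" "\<bar>v $ 2\<bar> < 1" "\<bar>v $ 3\<bar> < 1 / \<mu>"
  shows "g (\<iota> v) = \<iota> (diag3 lam lamt \<mu> v)"
  using linear_part[OF abs_tau assms] chart_inverse(3) by (metis diag3_def)

lemma iterate_g_linear:
  assumes "\<bar>v $ 1\<bar> < 1" "\<bar>v $ 2\<bar> < 1" "\<mu> ^ m * \<bar>v $ 3\<bar> < 1"
  shows "(g ^^ m) (\<iota> v) = \<iota> (diag3 (lam ^ m) (lamt ^ m) (\<mu> ^ m) v)"
  using assms(3)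
proof (induction m)
  case 0
  then show ?case by (simp add: diag3_1)
next
  case (Suc m)
  have "\<mu> ^ m * \<bar>v $ 3\<bar> \<le> \<mu> ^ Suc m * \<bar>v $ 3\<bar>"
    using rates by (intro mult_right_mono) auto
  with Suc have IH: "(g ^^ m) (\<iota> v) = \<iota> (diag3 (lam ^ m) (lamt ^ m) (\<mu> ^ m) v)"
    by linarith
  have "\<bar>\<mu> ^ m * v $ 3\<bar> < 1 / \<mu>"
    using Suc.prems rates by (simp add: abs_mult field_simps)
  then show ?case
    using IH assms rates abs_power_mult_less_one by (simp add: g_linear diag3_def mult.assoc)
qed

lemma unstable_axis_subset_Wu:
  assumes "\<bar>z\<bar> < 1"
  shows "\<iota> (vector [0, 0, z]) \<in> Wu_point g X"
proof -
  have small: "\<mu> ^ m * \<bar>z / \<mu> ^ m\<bar> < 1" for m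
    using assms rates by (simp add: abs_divide)
  have inv_iterate: "(inv g ^^ m) ((g ^^ m) w) = w" for m w
    by (metis inv_fn_o_fn_is_id[OF bij_g] comp_apply)
  have "(g ^^ m) (\<iota> (vector [0, 0, z / \<mu> ^ m])) = \<iota> (vector [0, 0, z])" for m
    using iterate_g_linear[of "vector [0, 0, z / \<mu> ^ m]" m] small[of m] rates by (simp add: diag3_def)
  then have "(inv g ^^ m) (\<iota> (vector [0, 0, z])) = \<iota> (vector [0, 0, z / \<mu> ^ m])" for m
    by (metis inv_iterate)
  moreover have "(\<lambda>m. vector [0, 0, z / \<mu> ^ m] :: real^3) \<longlonglongrightarrow> vector [0, 0, 0]"
    using rates by (intro tendsto_vector3 tendsto_const LIMSEQ_divide_realpow_zero) auto
  moreover have "\<bar>z / \<mu> ^ m\<bar> < 1" for m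
    using small[of m] rates one_le_power[of \<mu> m] by (smt (verit) mult_le_cancel_right1)
  ultimately have "(\<lambda>m. (inv g ^^ m) (\<iota> (vector [0, 0, z]))) \<longlonglongrightarrow> \<iota> (vector [0, 0, 0])"
    by (auto intro!: tendsto_chart_inverse in_chart_image)
  then show ?thesis
    by (simp add: Wu_point_def Ws_point_def vector_3_zero chart_inverse_zero)
qed

lemma stable_plane_subset_Ws:
  assumes "\<bar>x\<bar> < 1" "\<bar>y\<bar> < 1"
  shows "\<iota> (vector [x, y, 0]) \<in> Ws_point g X"
proof -
  have "(g ^^ m) (\<iota> (vector [x, y, 0])) = \<iota> (vector [lam ^ m * x, lamt ^ m * y, 0])" for m
    using iterate_g_linear[of "vector [x, y, 0]" m] assms by (simp add: diag3_def)
  moreover have "(\<lambda>m. vector [lam ^ m * x, lamt ^ m * y, 0] :: real^3) \<longlonglongrightarrow> vector [0, 0, 0]"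
    using rates by (intro tendsto_vector3 tendsto_mult_left_zero LIMSEQ_power_zero tendsto_const) auto
  ultimately have "(\<lambda>m. (g ^^ m) (\<iota> (vector [x, y, 0]))) \<longlonglongrightarrow> \<iota> (vector [0, 0, 0])"
    using rates assms abs_power_mult_less_one by (auto intro!: tendsto_chart_inverse in_chart_image)
  then show ?thesis
    by (simp add: Ws_point_def vector_3_zero chart_inverse_zero)
qed

definition \<sigma> :: real where "\<sigma> = lamt ^ n * b"
definition \<eta> :: real where "\<eta> = lamt ^ n * q"
definition \<Lambda> :: real where "\<Lambda> = (lam * \<mu>) ^ n * a * c"
definition y0 :: real where "y0 = \<eta> / (1 - \<sigma>)"
definition Y0 :: "real^3" where "Y0 = vector [0, y0, p]"
definition period :: nat where "period = 2 * (n + N)"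

text \<open>The return map g^(n+N) read in the chart; ret_dom is where both the transition and the
  n linear steps apply.\<close>
definition ret :: "real^3 \<Rightarrow> real^3" where
  "ret u = vector [lam ^ n * a * (u $ 3 - p), \<sigma> * u $ 2 + \<eta>, p + \<mu> ^ n * c * u $ 1]"

definition ret_dom :: "(real^3) set" where
  "ret_dom = {u. \<bar>u $ 1\<bar> < e0 \<and> \<bar>u $ 2\<bar> < e0 \<and> \<bar>u $ 3 - p\<bar> < e0 \<and>
     \<bar>a * (u $ 3 - p)\<bar> < 1 \<and> \<bar>b * u $ 2 + q\<bar> < 1 \<and> \<mu> ^ n * \<bar>c * u $ 1 + \<tau>\<bar> < 1}"

lemma eta_pos: "0 < \<eta>" and eta_small: "4 * \<eta> < e0"
  using rates pq regime(3) by (simp_all add: \<eta>_def)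

lemma sigma_nonzero: "\<sigma> \<noteq> 0" and sigma_small: "4 * \<bar>\<sigma>\<bar> < 1 - q"
  using rates bc regime(2) by (simp_all add: \<sigma>_def abs_mult)

lemma y0_fixed: "\<sigma> * y0 + \<eta> = y0"
  using sigma_small pq by (simp add: y0_def field_simps)

lemma eta_eq: "\<eta> = y0 - \<sigma> * y0"
  using y0_fixed by simp

lemma y0_bounds: "0 < y0" "y0 \<le> 2 * \<eta>"
  using sigma_small pq eta_pos by (auto simp: y0_def field_simps)

lemma expansion_bounds:
  assumes "\<bar>\<Lambda>\<bar> \<le> \<bar>F\<bar>"
  shows "1 < \<bar>F\<bar>" "p / \<bar>F\<bar> < 1 - p" "p / \<bar>F\<bar> < e0" "\<bar>a\<bar> * p / \<bar>F\<bar> < 1"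
proof -
  have nonneg: "0 \<le> p / (1 - p)" "0 \<le> p / e0" "0 \<le> \<bar>a\<bar> * p"
    using pq e0(1) by simp_all
  have F: "1 + p / (1 - p) + p / e0 + \<bar>a\<bar> * p < \<bar>F\<bar>"
    using regime(4) assms by (simp add: \<Lambda>_def)
  then show F1: "1 < \<bar>F\<bar>" using nonneg by linarith
  have "p / (1 - p) < \<bar>F\<bar>" "p / e0 < \<bar>F\<bar>" "\<bar>a\<bar> * p < \<bar>F\<bar>"
    using F nonneg by linarith+
  then show "p / \<bar>F\<bar> < 1 - p" "p / \<bar>F\<bar> < e0" "\<bar>a\<bar> * p / \<bar>F\<bar> < 1"
    using pq e0(1) F1 by (simp_all add: field_simps)
qed

lemma open_ret_dom: "open ret_dom"
  unfolding ret_dom_def by (intro open_Collect_conj open_Collect_less continuous_intros)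

lemma ret_dom_subset: "ret_dom \<subseteq> \<phi> ` U"
  using e0(2) by (force simp: ret_dom_def)

lemma return_map:
  assumes "u \<in> ret_dom"
  shows "ret u \<in> \<phi> ` U" and "(g ^^ (n + N)) (\<iota> u) = \<iota> (ret u)"
proof -
  define w :: "real^3" where "w = vector [a * (u $ 3 - p), b * u $ 2 + q, c * u $ 1 + \<tau>]"
  have u: "\<bar>u $ 1\<bar> < e0" "\<bar>u $ 2\<bar> < e0" "\<bar>u $ 3 - p\<bar> < e0" "\<bar>w $ 1\<bar> < 1" "\<bar>w $ 2\<bar> < 1"
    "\<mu> ^ n * \<bar>w $ 3\<bar> < 1"
    using assms by (simp_all add: ret_dom_def w_def)
  have "u = vector [u $ 1, u $ 2, (u $ 3 - p) + p]"
    by (simp add: vec_eq_iff forall_3)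
  then have "(g ^^ N) (\<iota> u) = \<iota> w"
    using transition[OF abs_tau, of "u $ 1" "u $ 2" "u $ 3 - p"] u chart_inverse(3) by (metis less_imp_le w_def)
  moreover have "diag3 (lam ^ n) (lamt ^ n) (\<mu> ^ n) w = ret u"
    using tau by (simp add: w_def ret_def \<sigma>_def \<eta>_def vec_eq_iff forall_3 algebra_simps)
  ultimately show "(g ^^ (n + N)) (\<iota> u) = \<iota> (ret u)"
    using iterate_g_linear[OF u(4-6)] by (simp add: funpow_add)
  have "\<bar>\<mu> ^ n * w $ 3\<bar> < 1"
    using u(6) rates by (simp add: abs_mult)
  then show "ret u \<in> \<phi> ` U"
    using \<open>diag3 (lam ^ n) (lamt ^ n) (\<mu> ^ n) w = ret u\<close> u(4,5) rates
    by (metis in_chart_image diag3_nth abs_power_mult_less_one less_imp_le)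
qed

lemma second_return_map:
  assumes "u \<in> ret_dom" "ret u \<in> ret_dom"
  shows "(g ^^ period) (\<iota> u) = \<iota> (ret (ret u))"
proof -
  have "g ^^ period = g ^^ (n + N) \<circ> g ^^ (n + N)"
    by (metis funpow_add mult_2 period_def)
  then show ?thesis
    using return_map(2)[OF assms(1)] return_map(2)[OF assms(2)] by simp
qed

lemma second_return: "ret (ret u) = Y0 + diag3 \<Lambda> (\<sigma>\<^sup>2) \<Lambda> (u - Y0)"
  by (simp add: eta_eq ret_def Y0_def \<Lambda>_def vec_eq_iff forall_3 power_mult_distrib power2_eq_square
      algebra_simps)

lemma continuous_ret: "continuous_on UNIV ret"
  unfolding continuous_on_def ret_def by (auto intro!: tendsto_vector3 tendsto_intros)

lemma ret_on_line: "ret (vector [0, y, p]) = vector [0, \<sigma> * y + \<eta>, p]"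
  by (simp add: ret_def)

lemma line_in_ret_dom:
  assumes "\<bar>y\<bar> \<le> 4 * \<eta>"
  shows "vector [0, y, p] \<in> ret_dom"
proof -
  have "\<bar>b * y\<bar> \<le> \<bar>b\<bar> * (4 * \<eta>)"
    using assms by (simp add: abs_mult mult_left_mono)
  also have "\<dots> = 4 * \<bar>\<sigma>\<bar> * q"
    using rates by (simp add: \<sigma>_def \<eta>_def abs_mult)
  also have "\<dots> < (1 - q) * q"
    using sigma_small pq by simp
  also have "\<dots> = 1 - q - (1 - q)\<^sup>2"
    by (simp add: power2_eq_square algebra_simps)
  finally have "\<bar>b * y + q\<bar> < 1"
    using pq abs_triangle_ineq[of "b * y" q] zero_le_power2[of "1 - q"] by linarith
  then show ?thesis
    using assms eta_small tau tau_pos pq e0(1) by (simp add: ret_dom_def abs_mult)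
qed

lemma line_invariant:
  assumes "\<bar>y\<bar> \<le> 4 * \<eta>"
  shows "\<bar>\<sigma> * y + \<eta>\<bar> \<le> 4 * \<eta>"
proof -
  have "\<bar>\<sigma>\<bar> * \<bar>y\<bar> \<le> 1/4 * (4 * \<eta>)"
    using sigma_small pq assms by (intro mult_mono) auto
  then show ?thesis
    using eta_pos abs_triangle_ineq[of "\<sigma> * y" \<eta>] by (simp add: abs_mult)
qed

lemma Y0_in_ret_dom: "Y0 \<in> ret_dom"
  using line_in_ret_dom y0_bounds eta_pos unfolding Y0_def by simp

lemma ret_Y0: "ret Y0 = Y0"
  using y0_fixed by (simp add: Y0_def ret_on_line)

definition Y :: 'm where "Y = \<iota> Y0"

lemma periodic_Y: "(g ^^ period) Y = Y"
  using second_return_map Y0_in_ret_dom ret_Y0 by (simp add: Y_def)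

lemma hyperbolic_fixed_index_Y: "hyperbolic_fixed_index A (g ^^ period) Y 2"
proof -
  have \<Lambda>: "1 < \<bar>\<Lambda>\<bar>"
    using expansion_bounds by simp
  have \<sigma>: "\<sigma>\<^sup>2 \<noteq> 0" "\<bar>\<sigma>\<^sup>2\<bar> < 1"
    using sigma_nonzero sigma_small pq by (auto simp: abs_square_less_1)
  have "bounded_linear (diag3 \<Lambda> (\<sigma>\<^sup>2) \<Lambda>)"
    using linear_diag3 linear_conv_bounded_linear by blast
  from bounded_linear.has_derivative[OF this has_derivative_diff[OF has_derivative_ident has_derivative_const]]
  have deriv: "((\<lambda>u. ret (ret u)) has_derivative diag3 \<Lambda> (\<sigma>\<^sup>2) \<Lambda>) (at Y0)"
    unfolding second_return by (subst add.commute) (auto intro: has_derivative_add_const)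
  have Y: "Y \<in> U" "\<phi> Y = Y0"
    using ret_dom_subset Y0_in_ret_dom chart_inverse by (auto simp: Y_def)
  have "hyperbolic_fixed_index A (g ^^ period) Y (dim (unstable_subspace (diag3 \<Lambda> (\<sigma>\<^sup>2) \<Lambda>)))"
  proof (rule hyperbolic_fixed_index_from_chart[OF atlas chart, where Om = "ret_dom \<inter> ret -` ret_dom"
        and H = "\<lambda>u. ret (ret u)" and D' = "diag3 (1/\<Lambda>) (1/\<sigma>\<^sup>2) (1/\<Lambda>)"])
    show "Y \<in> U" "(g ^^ period) Y = Y"
      using Y periodic_Y by simp_all
    show "(g ^^ period) (\<iota> u) = \<iota> (ret (ret u))" if "u \<in> ret_dom \<inter> ret -` ret_dom" for u
      using that second_return_map by simp
    show "\<phi> Y \<in> ret_dom \<inter> ret -` ret_dom" "ret (ret (\<phi> Y)) = \<phi> Y"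
      using Y Y0_in_ret_dom ret_Y0 by simp_all
    show "open (ret_dom \<inter> ret -` ret_dom)"
      using open_ret_dom continuous_ret by (intro open_Int open_vimage)
    show "((\<lambda>u. ret (ret u)) has_derivative diag3 \<Lambda> (\<sigma>\<^sup>2) \<Lambda>) (at (\<phi> Y))"
      using deriv Y by simp
    show "hyperbolic_lin (diag3 \<Lambda> (\<sigma>\<^sup>2) \<Lambda>)"
      using \<Lambda> \<sigma> by (intro hyperbolic_lin_diag3) auto
    show "diag3 \<Lambda> (\<sigma>\<^sup>2) \<Lambda> \<circ> diag3 (1/\<Lambda>) (1/\<sigma>\<^sup>2) (1/\<Lambda>) = id"
      "diag3 (1/\<Lambda>) (1/\<sigma>\<^sup>2) (1/\<Lambda>) \<circ> diag3 \<Lambda> (\<sigma>\<^sup>2) \<Lambda> = id"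
      using \<Lambda> \<sigma> by (auto intro: diag3_inverse)
  qed
  moreover have "dim (unstable_subspace (diag3 \<Lambda> (\<sigma>\<^sup>2) \<Lambda>)) = 2"
    using \<Lambda> \<sigma> by (intro dim_unstable_subspace_diag3_saddle) auto
  ultimately show ?thesis
    by (simp only:)
qed
lemma line_iterates:
  assumes "\<bar>y\<bar> \<le> 4 * \<eta>"
  shows "((g ^^ period) ^^ m) (\<iota> (vector [0, y, p])) = \<iota> (vector [0, y0 + (\<sigma>\<^sup>2) ^ m * (y - y0), p])"
  using assms
proof (induction m arbitrary: y)
  case 0
  then show ?case by simp
next
  case (Suc m)
  define y' where "y' = \<sigma> * (\<sigma> * y + \<eta>) + \<eta>"
  have y': "\<bar>y'\<bar> \<le> 4 * \<eta>"
    unfolding y'_def using Suc.prems by (intro line_invariant)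
  have "((g ^^ period) ^^ Suc m) (\<iota> (vector [0, y, p])) = ((g ^^ period) ^^ m) (\<iota> (vector [0, y', p]))"
    using second_return_map line_in_ret_dom line_invariant Suc.prems
    by (simp add: funpow_Suc_right ret_on_line y'_def del: funpow.simps)
  also have "\<dots> = \<iota> (vector [0, y0 + (\<sigma>\<^sup>2) ^ m * (y' - y0), p])"
    using Suc.IH[OF y'] .
  also have "y' - y0 = \<sigma>\<^sup>2 * (y - y0)"
    by (simp add: y'_def eta_eq power2_eq_square algebra_simps)
  finally show ?case
    by (simp add: ac_simps)
qed

lemma stable_segment_subset_Ws:
  assumes "\<bar>y\<bar> \<le> 4 * \<eta>"
  shows "\<iota> (vector [0, y, p]) \<in> Ws_point (g ^^ period) Y"
proof -
  have "norm (\<sigma>\<^sup>2) < 1"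
    using sigma_small pq by (simp add: abs_square_less_1)
  then have "(\<lambda>m. vector [0, y0 + (\<sigma>\<^sup>2) ^ m * (y - y0), p] :: real^3) \<longlonglongrightarrow> vector [0, y0 + 0, p]"
    by (intro tendsto_vector3 tendsto_intros tendsto_mult_left_zero LIMSEQ_power_zero)
  then have "(\<lambda>m. ((g ^^ period) ^^ m) (\<iota> (vector [0, y, p]))) \<longlonglongrightarrow> Y"
    using line_iterates[OF assms] ret_dom_subset Y0_in_ret_dom
    by (auto simp: Y_def Y0_def intro!: tendsto_chart_inverse)
  then show ?thesis
    by (simp add: Ws_point_def)
qed

text \<open>On the line {y = y0, z = p} the second return acts as x \<mapsto> \<Lambda> x; Z j is the j-th backward
  iterate of the point that g^N sends into the stable plane of X.\<close>
definition Z :: "nat \<Rightarrow> real^3" where "Z j = vector [- \<tau> / (c * \<Lambda> ^ j), y0, p]"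

lemma second_return_Z:
  shows "Z (Suc j) \<in> ret_dom" "ret (Z (Suc j)) \<in> ret_dom" "ret (ret (Z (Suc j))) = Z j"
proof -
  define F where "F = \<Lambda> ^ Suc j"
  have "\<bar>\<Lambda>\<bar> \<le> \<bar>F\<bar>"
    using expansion_bounds(1)[of \<Lambda>] unfolding F_def power_abs
    by (metis order_refl power_increasing Suc_eq_plus1 le_add2 power_one_right less_imp_le)
  note F = expansion_bounds[OF this]
  have F0: "F \<noteq> 0" using F(1) by auto
  have Z: "Z (Suc j) = vector [- \<tau> / (c * F), y0, p]" and ret_Z: "ret (Z (Suc j)) = vector [0, y0, p - p / F]"
    using y0_fixed tau bc F0 by (simp_all add: Z_def F_def ret_def vec_eq_iff forall_3 field_simps)
  have "\<bar>- \<tau> / (c * F)\<bar> \<le> \<tau> / \<bar>c\<bar>"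
    using F(1) tau_pos bc by (simp add: abs_mult divide_le_eq field_simps)
  also have "\<dots> < e0"
    using regime(1) bc by (simp add: divide_less_eq mult.commute)
  finally have x: "\<bar>- \<tau> / (c * F)\<bar> < e0" .
  have "\<mu> ^ n * (c * (- \<tau> / (c * F)) + \<tau>) = p - p / F"
    using tau bc F0 by (simp add: field_simps)
  then have "\<mu> ^ n * \<bar>c * (- \<tau> / (c * F)) + \<tau>\<bar> = \<bar>p - p / F\<bar>"
    using rates by (metis abs_mult abs_of_pos zero_less_power less_trans zero_less_one)
  also have "\<dots> \<le> p + p / \<bar>F\<bar>"
    using abs_triangle_ineq4[of p "p / F"] pq by simp
  finally have third: "\<mu> ^ n * \<bar>c * (- \<tau> / (c * F)) + \<tau>\<bar> < 1"
    using F(2) by linarith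
  have y0: "\<bar>y0\<bar> < e0" "\<bar>b * y0 + q\<bar> < 1"
    using Y0_in_ret_dom by (simp_all add: Y0_def ret_dom_def)
  show "Z (Suc j) \<in> ret_dom"
    unfolding Z using x y0 third by (simp add: ret_dom_def)
  show "ret (Z (Suc j)) \<in> ret_dom"
    unfolding ret_Z using y0 F(3,4) tau tau_pos pq rates
    by (simp add: ret_dom_def abs_mult abs_divide)
  show "ret (ret (Z (Suc j))) = Z j"
    unfolding ret_Z using tau F0 bc y0_fixed rates by (simp add: ret_def Z_def F_def \<Lambda>_def vec_eq_iff forall_3 field_simps)
qed

lemma unstable_point_in_Wu: "\<iota> (Z 0) \<in> Wu_point (g ^^ period) Y"
proof -
  have "(g ^^ period) (\<iota> (Z (Suc j))) = \<iota> (Z j)" for j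
    using second_return_map second_return_Z by simp
  then have "inv (g ^^ period) (\<iota> (Z j)) = \<iota> (Z (Suc j))" for j
    using bij_g by (metis bij_fn bij_is_inj inv_f_f)
  then have iterates: "(inv (g ^^ period) ^^ j) (\<iota> (Z 0)) = \<iota> (Z j)" for j
    by (induction j) simp_all
  have "norm (1 / \<Lambda>) < 1"
    using expansion_bounds(1)[of \<Lambda>] by simp
  then have "(\<lambda>j. vector [- \<tau> / c * (1 / \<Lambda>) ^ j, y0, p] :: real^3) \<longlonglongrightarrow> vector [- \<tau> / c * 0, y0, p]"
    by (intro tendsto_vector3 tendsto_intros LIMSEQ_power_zero)
  then have "Z \<longlonglongrightarrow> Y0"
    by (simp add: Z_def[abs_def] Y0_def power_one_over)
  then have "(\<lambda>j. \<iota> (Z j)) \<longlonglongrightarrow> Y"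
    unfolding Y_def using ret_dom_subset Y0_in_ret_dom by (intro tendsto_chart_inverse) auto
  then show ?thesis
    by (simp add: Wu_point_def Ws_point_def iterates)
qed

lemma unstable_point_in_Ws_X: "\<iota> (Z 0) \<in> Ws_point g X"
proof -
  have y0: "\<bar>y0\<bar> < e0" "\<bar>b * y0 + q\<bar> < 1"
    using Y0_in_ret_dom by (simp_all add: Y0_def ret_dom_def)
  have "\<bar>- \<tau> / c\<bar> \<le> e0"
    using regime(1) bc tau_pos by (simp add: divide_le_eq mult.commute)
  with y0 e0(1) have "(g ^^ N) (\<iota> (vector [- \<tau> / c, y0, 0 + p])) \<in> U \<and>
      \<phi> ((g ^^ N) (\<iota> (vector [- \<tau> / c, y0, 0 + p]))) = vector [0, b * y0 + q, 0]"
    using transition[OF abs_tau, of "- \<tau> / c" y0 0] bc by simp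
  then have gN: "(g ^^ N) (\<iota> (vector [- \<tau> / c, y0, 0 + p])) = \<iota> (vector [0, b * y0 + q, 0])"
    using chart_inverse(3) by metis
  have "\<iota> (vector [0, b * y0 + q, 0]) \<in> Ws_point g X"
    using y0 by (intro stable_plane_subset_Ws) simp_all
  then have "\<iota> (vector [- \<tau> / c, y0, 0 + p]) \<in> Ws_point g X"
    unfolding gN[symmetric] by (rule Ws_point_funpow_iff[THEN iffD1])
  then show ?thesis
    by (simp add: Z_def)
qed

theorem heterodimensional_cycle:
  "1 \<le> period \<and> (g ^^ period) Y = Y \<and> hyperbolic_fixed_index A (g ^^ period) Y 2 \<and>
   Wu_point g X \<inter> Ws_orbit g period Y \<noteq> {} \<and> Ws_point g X \<inter> Wu_orbit g period Y \<noteq> {}"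
proof (intro conjI)
  have Y: "Y \<in> orbit g Y"
    unfolding orbit_def by (metis (mono_tags) funpow_0 mem_Collect_eq)
  have "\<iota> (vector [0, 0, p]) \<in> Wu_point g X \<inter> Ws_point (g ^^ period) Y"
    using unstable_axis_subset_Wu stable_segment_subset_Ws eta_pos pq by simp
  with Y show "Wu_point g X \<inter> Ws_orbit g period Y \<noteq> {}"
    unfolding Ws_orbit_def by blast
  have "\<iota> (Z 0) \<in> Ws_point g X \<inter> Wu_point (g ^^ period) Y"
    using unstable_point_in_Ws_X unstable_point_in_Wu by simp
  with Y show "Ws_point g X \<inter> Wu_orbit g period Y \<noteq> {}"
    unfolding Wu_orbit_def by blast
  show "1 \<le> period"
    using N by (simp add: period_def)
qed (fact periodic_Y hyperbolic_fixed_index_Y)+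

end

lemma det_deriv_at_fixed_diag3_chart:
  fixes A :: "('m::t2_space set \<times> ('m \<Rightarrow> real ^ 3)) set" and f :: "'m \<Rightarrow> 'm"
  assumes atlas: "C1_atlas A" and cc: "compatible_chart A U \<phi>" and X: "X \<in> U" "\<phi> X = 0"
    and "0 < \<gamma>"
    and local_form: "\<And>v. \<bar>v $ 1\<bar> < 1 \<Longrightarrow> \<bar>v $ 2\<bar> < 1 \<Longrightarrow> \<bar>v $ 3\<bar> < 1 / \<gamma> \<Longrightarrow>
        f (inv_into U \<phi> v) \<in> U \<and> \<phi> (f (inv_into U \<phi> v)) = diag3 \<alpha> \<beta> \<gamma> v"
    and L: "deriv_at_fixed A f X L"
  shows "det (matrix L) = \<alpha> * \<beta> * \<gamma>"
proof -
  define Om where "Om = {v :: real^3. \<bar>v $ 1\<bar> < 1 \<and> \<bar>v $ 2\<bar> < 1 \<and> \<bar>v $ 3\<bar> < 1 / \<gamma>}"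
  have "open Om"
    unfolding Om_def by (intro open_Collect_conj open_Collect_less continuous_intros)
  have "inj_on \<phi> U"
    using cc by (simp add: compatible_chart_def is_chart_def)
  then have "f (inv_into U \<phi> u) = inv_into U \<phi> (diag3 \<alpha> \<beta> \<gamma> u)" if "u \<in> Om" for u
    using local_form that unfolding Om_def by (metis (mono_tags, lifting) inv_into_f_f mem_Collect_eq)
  moreover have "(diag3 \<alpha> \<beta> \<gamma> has_derivative diag3 \<alpha> \<beta> \<gamma>) (at (\<phi> X))"
    using linear_diag3 by (simp add: bounded_linear_imp_has_derivative linear_conv_bounded_linear)
  moreover have "\<phi> X \<in> Om" "diag3 \<alpha> \<beta> \<gamma> (\<phi> X) = \<phi> X"
    using X \<open>0 < \<gamma>\<close> by (simp_all add: Om_def vec_eq_iff forall_3)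
  ultimately show ?thesis
    using det_deriv_at_fixed_from_chart[OF atlas cc X(1) \<open>open Om\<close>] linear_diag3 L det_matrix_diag3
    by metis
qed

lemma eventually_return_regime:
  fixes lam lamt \<mu> p q a b c e0 \<epsilon> :: real
  assumes "0 < lamt" "lamt < 1" "1 < lam * \<mu>" "1 < \<mu>" "0 < p" "p < 1" "q < 1" "0 < e0"
    and "a \<noteq> 0" "c \<noteq> 0" "0 < \<epsilon>"
  shows "\<forall>\<^sub>F n in sequentially. p / \<mu> ^ n < \<epsilon> \<and> p / \<mu> ^ n < \<bar>c\<bar> * e0 \<and>
    4 * lamt ^ n * \<bar>b\<bar> < 1 - q \<and> 4 * lamt ^ n * q < e0 \<and>
    1 + p / (1 - p) + p / e0 + \<bar>a\<bar> * p < \<bar>(lam * \<mu>) ^ n * a * c\<bar>"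
proof -
  define K where "K = 1 + p / (1 - p) + p / e0 + \<bar>a\<bar> * p"
  have "K > 0" using assms by (simp add: K_def add_pos_nonneg)
  have "(\<lambda>n. p / \<mu> ^ n) \<longlonglongrightarrow> 0" "(\<lambda>n. 4 * lamt ^ n * \<bar>b\<bar>) \<longlonglongrightarrow> 0" "(\<lambda>n. 4 * lamt ^ n * q) \<longlonglongrightarrow> 0"
    "(\<lambda>n. (1 / (lam * \<mu>)) ^ n) \<longlonglongrightarrow> 0"
    using assms by (auto intro!: LIMSEQ_divide_realpow_zero tendsto_mult_right_zero tendsto_mult_left_zero
        LIMSEQ_power_zero)
  then have "\<forall>\<^sub>F n in sequentially. p / \<mu> ^ n < \<epsilon> \<and> p / \<mu> ^ n < \<bar>c\<bar> * e0 \<and>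
    4 * lamt ^ n * \<bar>b\<bar> < 1 - q \<and> 4 * lamt ^ n * q < e0 \<and> (1 / (lam * \<mu>)) ^ n < \<bar>a * c\<bar> / K"
    using assms \<open>K > 0\<close> by (intro eventually_conj order_tendstoD(2)) auto
  moreover have "K < \<bar>(lam * \<mu>) ^ n * a * c\<bar>" if "(1 / (lam * \<mu>)) ^ n < \<bar>a * c\<bar> / K" for n
  proof -
    have "0 < (lam * \<mu>) ^ n" using assms(3) by simp
    then show ?thesis
      using that \<open>K > 0\<close> by (simp add: power_one_over field_simps abs_mult del: power_mult_distrib)
  qed
  ultimately show ?thesis
    unfolding K_def by (auto elim: eventually_mono)
qed

theorem proposition4p3:
  fixes A :: "('m::t2_space set \<times> ('m \<Rightarrow> real ^ 3)) set"
    and f0 :: "'m \<Rightarrow> 'm" and X :: 'm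
    and fam :: "real \<Rightarrow> 'm \<Rightarrow> 'm" and \<delta> :: real
    and U :: "'m set" and \<phi> :: "'m \<Rightarrow> real ^ 3"
    and lam lamt \<mu> :: real and P Q :: 'm and p q :: real and N :: nat
    and a b c :: real
  assumes M: "closed_3_manifold A"
    and f0_diff: "Diff1 A f0"
    and X_hyp: "\<exists>L. deriv_at_fixed A f0 X L \<and> hyperbolic_lin L \<and> dim (unstable_subspace L) = 1
                   \<and> \<bar>det (matrix L)\<bar> > 1
                   \<and> (\<forall>z. eigenvalue L z \<longrightarrow> z \<in> \<real> \<and> Re z > 0)
                   \<and> card {z. eigenvalue L z} = 3"
    and \<delta>_pos: "\<delta> > 0"
    and fam_diff: "\<And>t. \<bar>t\<bar> < \<delta> \<Longrightarrow> Diff1 A (fam t)"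
    and DT1: "fam 0 = f0"
    and DT2: "compatible_chart A U \<phi>"
      "\<phi> ` U = {v. \<forall>i. -1 < v $ i \<and> v $ i < 1}"
      "X \<in> U" "\<phi> X = 0"
    and DT3_const: "0 < lamt" "lamt < lam" "lam < 1" "1 < \<mu>"
    and DT3: "\<And>t v. \<bar>t\<bar> < \<delta> \<Longrightarrow> \<bar>v $ 1\<bar> < 1 \<Longrightarrow> \<bar>v $ 2\<bar> < 1 \<Longrightarrow> \<bar>v $ 3\<bar> < 1 / \<mu> \<Longrightarrow>
        fam t (inv_into U \<phi> v) \<in> U \<and>
        \<phi> (fam t (inv_into U \<phi> v)) = vector [lam * v $ 1, lamt * v $ 2, \<mu> * v $ 3]"
    and DT4: "P \<in> U" "Q \<in> U" "\<phi> P = vector [0, 0, p]" "\<phi> Q = vector [0, q, 0]"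
      "0 < p" "p < 1" "0 < q" "q < 1" "N \<ge> 2" "(f0 ^^ N) P = Q"
      "\<And>t i. \<bar>t\<bar> < \<delta> \<Longrightarrow> 0 < i \<Longrightarrow> i < N \<Longrightarrow> (fam t ^^ i) P \<notin> U"
    and DT5: "\<exists>\<epsilon>0>0. {v. \<bar>v $ 1\<bar> \<le> \<epsilon>0 \<and> \<bar>v $ 2\<bar> \<le> \<epsilon>0 \<and> \<bar>v $ 3 - p\<bar> \<le> \<epsilon>0} \<subseteq> \<phi> ` U \<and>
        (\<forall>t x y z. \<bar>t\<bar> < \<delta> \<longrightarrow> \<bar>x\<bar> \<le> \<epsilon>0 \<longrightarrow> \<bar>y\<bar> \<le> \<epsilon>0 \<longrightarrow> \<bar>z\<bar> \<le> \<epsilon>0 \<longrightarrow>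
           (fam t ^^ N) (inv_into U \<phi> (vector [x, y, z + p])) \<in> U \<and>
           \<phi> ((fam t ^^ N) (inv_into U \<phi> (vector [x, y, z + p]))) = vector [a * z, b * y + q, c * x + t])"
      "a \<noteq> 0" "b \<noteq> 0" "c \<noteq> 0"
  shows "\<exists>\<epsilon>1>0. \<forall>\<epsilon>. 0 < \<epsilon> \<and> \<epsilon> < \<epsilon>1 \<longrightarrow>
           (\<exists>\<tau>. 0 < \<tau> \<and> \<tau> \<le> \<epsilon> \<and> \<tau> < \<delta> \<and>
              (\<exists>Y k. k \<ge> 1 \<and> (fam \<tau> ^^ k) Y = Y \<and> hyperbolic_fixed_index A (fam \<tau> ^^ k) Y 2 \<and>
                 Wu_point (fam \<tau>) X \<inter> Ws_orbit (fam \<tau>) k Y \<noteq> {} \<and>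
                 Ws_point (fam \<tau>) X \<inter> Wu_orbit (fam \<tau>) k Y \<noteq> {}))"
proof (rule exI[of _ 1], intro conjI allI impI)
  fix \<epsilon> :: real
  assume "0 < \<epsilon> \<and> \<epsilon> < 1"
  obtain e0 where e0: "e0 > 0" "{v. \<bar>v $ 1\<bar> \<le> e0 \<and> \<bar>v $ 2\<bar> \<le> e0 \<and> \<bar>v $ 3 - p\<bar> \<le> e0} \<subseteq> \<phi> ` U"
    "\<And>t x y z. \<bar>t\<bar> < \<delta> \<Longrightarrow> \<bar>x\<bar> \<le> e0 \<Longrightarrow> \<bar>y\<bar> \<le> e0 \<Longrightarrow> \<bar>z\<bar> \<le> e0 \<Longrightarrow>
       (fam t ^^ N) (inv_into U \<phi> (vector [x, y, z + p])) \<in> U \<and>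
       \<phi> ((fam t ^^ N) (inv_into U \<phi> (vector [x, y, z + p]))) = vector [a * z, b * y + q, c * x + t]"
    using DT5(1) by blast
  have atlas: "C1_atlas A"
    using M by (simp add: closed_3_manifold_def)
  obtain L where L: "deriv_at_fixed A f0 X L" "\<bar>det (matrix L)\<bar> > 1"
    using X_hyp by blast
  have "det (matrix L) = lam * lamt * \<mu>"
    using det_deriv_at_fixed_diag3_chart[OF atlas DT2(1,3,4) _ _ L(1)] DT3[of 0] \<delta>_pos DT1 DT3_const
    by (simp add: diag3_def)
  then have "1 < lam * \<mu>" \<comment> \<open>volume expansion, as lamt < 1\<close>
    using L(2) DT3_const by (smt (verit) mult_less_cancel_left2 mult_pos_pos mult.commute mult.assoc)
  then obtain n where n: "p / \<mu> ^ n < min \<epsilon> \<delta>" "p / \<mu> ^ n < \<bar>c\<bar> * e0"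
    "4 * lamt ^ n * \<bar>b\<bar> < 1 - q" "4 * lamt ^ n * q < e0"
    "1 + p / (1 - p) + p / e0 + \<bar>a\<bar> * p < \<bar>(lam * \<mu>) ^ n * a * c\<bar>"
    using eventually_return_regime[of lamt lam \<mu> p q e0 a c "min \<epsilon> \<delta>" b] DT3_const DT4 e0(1) DT5(2-4)
      \<open>0 < \<epsilon> \<and> \<epsilon> < 1\<close> \<delta>_pos
    unfolding eventually_sequentially by auto
  define \<tau> where "\<tau> = p / \<mu> ^ n"
  have \<tau>: "0 < \<tau>" "\<tau> \<le> \<epsilon>" "\<tau> < \<delta>" "\<bar>\<tau>\<bar> < \<delta>" "\<mu> ^ n * \<tau> = p"
    using n(1) DT4 DT3_const by (simp_all add: \<tau>_def)
  interpret affine_return_regime A U \<phi> X fam \<delta> lam lamt \<mu> p q a b c \<tau> e0 N n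
    by (unfold_locales; (fact DT3 e0(3))?)
      (use atlas DT2 fam_diff[of \<tau>] \<tau> DT3_const e0(1,2) DT4 DT5(3,4) n in \<open>simp_all add: \<tau>_def\<close>)
  show "\<exists>\<tau>. 0 < \<tau> \<and> \<tau> \<le> \<epsilon> \<and> \<tau> < \<delta> \<and>
          (\<exists>Y k. k \<ge> 1 \<and> (fam \<tau> ^^ k) Y = Y \<and> hyperbolic_fixed_index A (fam \<tau> ^^ k) Y 2 \<and>
             Wu_point (fam \<tau>) X \<inter> Ws_orbit (fam \<tau>) k Y \<noteq> {} \<and>
             Ws_point (fam \<tau>) X \<inter> Wu_orbit (fam \<tau>) k Y \<noteq> {})"
    using heterodimensional_cycle \<tau> by blast
qed simp

end
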